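(* Let $\mathcal{G}\in\mathbf{G}$ be a periodic graph. For every $\lambda<0$ there exists a subspace $Y\subset H^1(\mathcal{G})$ with $\dim Y=3$ such that \[ \|w'\|_{L^2(\mathcal G)}^2+\lambda\|w\|_{L^2(\mathcal G)}^2\le\frac\lambda2\|w\|_{H^1(\mathcal{G})}^2\qquad\forall w\in Y. \]
   Context: $\mathbf{G}$: connected metric graphs with at most countably many edges, finite vertex degrees and $\inf_e|e|>0$. A periodic graph has infinitely many edges of uniformly bounded length arranged periodically (free cocompact $\mathbb Z^d$-action by isometries). $\|w\|_{H^1(\mathcal G)}^2=\|w'\|_{L^2}^2+\|w\|_{L^2}^2$. *)

theory Defs
  imports "HOL-Analysis.Analysis" "HOL-Library.Function_Algebras"
begin

text \<open>Edge e is
  identified with the interval [0, len e], 0 corresponding to src e and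
  len e to tgt e.\<close>

record ('v, 'e) mgraph =
  verts :: "'v set"
  edges :: "'e set"
  src :: "'e \<Rightarrow> 'v"
  tgt :: "'e \<Rightarrow> 'v"
  len :: "'e \<Rightarrow> real"

definition incident_edges :: "('v, 'e) mgraph \<Rightarrow> 'v \<Rightarrow> 'e set" where
  "incident_edges G v = {e \<in> edges G. src G e = v \<or> tgt G e = v}"

definition adj :: "('v, 'e) mgraph \<Rightarrow> ('v \<times> 'v) set" where
  "adj G = {(src G e, tgt G e) | e. e \<in> edges G}"

definition class_G :: "('v, 'e) mgraph \<Rightarrow> bool" where
  "class_G G \<longleftrightarrow>
     (\<forall>e\<in>edges G. src G e \<in> verts G \<and> tgt G e \<in> verts G \<and> 0 < len G e) \<and>
     countable (edges G) \<and>
     (\<forall>v\<in>verts G. finite (incident_edges G v)) \<and>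
     (\<exists>c>0. \<forall>e\<in>edges G. c \<le> len G e) \<and>
     verts G \<noteq> {} \<and>
     (\<forall>u\<in>verts G. \<forall>v\<in>verts G. (u, v) \<in> (adj G \<union> (adj G)\<inverse>)\<^sup>*)"

definition isom_aut :: "('v, 'e) mgraph \<Rightarrow> ('v \<Rightarrow> 'v) \<Rightarrow> ('e \<Rightarrow> 'e) \<Rightarrow> bool" where
  "isom_aut G \<phi> \<psi> \<longleftrightarrow>
     bij_betw \<phi> (verts G) (verts G) \<and> bij_betw \<psi> (edges G) (edges G) \<and>
     (\<forall>e\<in>edges G. len G (\<psi> e) = len G e \<and>
        ((src G (\<psi> e) = \<phi> (src G e) \<and> tgt G (\<psi> e) = \<phi> (tgt G e)) \<or>
         (src G (\<psi> e) = \<phi> (tgt G e) \<and> tgt G (\<psi> e) = \<phi> (src G e))))"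

text \<open>The group \<open>\<int>^d\<close>, as integer sequences vanishing from index d on.\<close>

definition Zd :: "nat \<Rightarrow> (nat \<Rightarrow> int) set" where
  "Zd d = {k. \<forall>i\<ge>d. k i = 0}"

text \<open>Periodic graph: infinitely many edges of uniformly bounded length, with a
  free cocompact action of \<open>\<int>^d\<close> by isometric automorphisms.
  Freeness on the metric graph: no nonzero group element fixes a vertex or
  maps an edge onto itself (in either orientation).\<close>

definition periodic :: "('v, 'e) mgraph \<Rightarrow> bool" where
  "periodic G \<longleftrightarrow> class_G G \<and> infinite (edges G) \<and>
     (\<exists>M. \<forall>e\<in>edges G. len G e \<le> M) \<and>
     (\<exists>d \<phi> \<psi>.
        (\<forall>k\<in>Zd d. isom_aut G (\<phi> k) (\<psi> k)) \<and>
        (\<forall>v\<in>verts G. \<phi> 0 v = v) \<and> (\<forall>e\<in>edges G. \<psi> 0 e = e) \<and>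
        (\<forall>k\<in>Zd d. \<forall>l\<in>Zd d. (\<forall>v\<in>verts G. \<phi> (k + l) v = \<phi> k (\<phi> l v)) \<and>
                             (\<forall>e\<in>edges G. \<psi> (k + l) e = \<psi> k (\<psi> l e))) \<and>
        (\<forall>k\<in>Zd d. k \<noteq> 0 \<longrightarrow>
            (\<forall>v\<in>verts G. \<phi> k v \<noteq> v) \<and> (\<forall>e\<in>edges G. \<psi> k e \<noteq> e)) \<and>
        (\<exists>F. finite F \<and> F \<subseteq> edges G \<and>
            (\<forall>e\<in>edges G. \<exists>k\<in>Zd d. \<exists>f\<in>F. \<psi> k f = e)) \<and>
        (\<exists>F. finite F \<and> F \<subseteq> verts G \<and>
            (\<forall>v\<in>verts G. \<exists>k\<in>Zd d. \<exists>f\<in>F. \<phi> k f = v)))"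

text \<open>Weak derivative on [0, l]: f is the integral of a square-integrable g
  (i.e. f is the continuous representative of an \<open>H^1(0,l)\<close> function).\<close>

definition weak_deriv_on :: "real \<Rightarrow> (real \<Rightarrow> real) \<Rightarrow> (real \<Rightarrow> real) \<Rightarrow> bool" where
  "weak_deriv_on l f g \<longleftrightarrow>
     g absolutely_integrable_on {0..l} \<and> (\<lambda>x. (g x)\<^sup>2) integrable_on {0..l} \<and>
     (\<forall>x\<in>{0..l}. f x = f 0 + integral {0..x} g)"

definition wderiv :: "real \<Rightarrow> (real \<Rightarrow> real) \<Rightarrow> real \<Rightarrow> real" where
  "wderiv l f = (SOME g. weak_deriv_on l f g)"

definition endpt :: "('v, 'e) mgraph \<Rightarrow> 'e \<Rightarrow> real \<Rightarrow> 'v" where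
  "endpt G e a = (if a = 0 then src G e else tgt G e)"

definition L2sq :: "('v, 'e) mgraph \<Rightarrow> ('e \<Rightarrow> real \<Rightarrow> real) \<Rightarrow> real" where
  "L2sq G w = (\<Sum>\<^sub>\<infinity>e\<in>edges G. integral {0..len G e} (\<lambda>x. (w e x)\<^sup>2))"

definition D2sq :: "('v, 'e) mgraph \<Rightarrow> ('e \<Rightarrow> real \<Rightarrow> real) \<Rightarrow> real" where
  "D2sq G w = (\<Sum>\<^sub>\<infinity>e\<in>edges G. integral {0..len G e} (\<lambda>x. (wderiv (len G e) (w e) x)\<^sup>2))"

definition H1sq :: "('v, 'e) mgraph \<Rightarrow> ('e \<Rightarrow> real \<Rightarrow> real) \<Rightarrow> real" where
  "H1sq G w = D2sq G w + L2sq G w"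

text \<open>Functions are normalised to vanish outside the
  edges, so that \<open>H^1(\<G>)\<close> is a set of genuine functions.\<close>

definition H1 :: "('v, 'e) mgraph \<Rightarrow> ('e \<Rightarrow> real \<Rightarrow> real) set" where
  "H1 G = {w.
     (\<forall>e. e \<notin> edges G \<longrightarrow> (\<forall>x. w e x = 0)) \<and>
     (\<forall>e\<in>edges G. (\<exists>g. weak_deriv_on (len G e) (w e) g) \<and>
                  (\<forall>x. x \<notin> {0..len G e} \<longrightarrow> w e x = 0)) \<and>
     (\<forall>e1\<in>edges G. \<forall>e2\<in>edges G. \<forall>a1\<in>{0, len G e1}. \<forall>a2\<in>{0, len G e2}.
        endpt G e1 a1 = endpt G e2 a2 \<longrightarrow> w e1 a1 = w e2 a2) \<and>
     (\<lambda>e. integral {0..len G e} (\<lambda>x. (w e x)\<^sup>2)) summable_on edges G \<and>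
     (\<lambda>e. integral {0..len G e} (\<lambda>x. (wderiv (len G e) (w e) x)\<^sup>2)) summable_on edges G}"

definition fscale :: "real \<Rightarrow> ('e \<Rightarrow> real \<Rightarrow> real) \<Rightarrow> ('e \<Rightarrow> real \<Rightarrow> real)" where
  "fscale c w = (\<lambda>e x. c * w e x)"

end

theory Submission
  imports Defs "HOL-Probability.Distribution_Functions"
begin

(*
  The test functions are piecewise linear interpolations of tent functions on the vertices.
  The free cocompact action of Z^d gives every vertex lattice coordinates, unique up to a
  bounded error, and the two endpoints of an edge have coordinates at bounded distance.  A tent
  that is 1 on the coordinate ball of radius m and vanishes outside radius 2m has slope O(1/m)
  along every edge and lives on O(m^d) edges, so its Dirichlet energy is O(m^(d-2)); its plateau
  contains at least m^d translates of a fixed edge, so its mass is of order m^d.  Tents with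
  centres 3m apart have disjoint plateaus, and by Cauchy-Schwarz every linear combination of n
  of them has Rayleigh quotient O(1/m^2).  For large m this is below -lambda/(2 - lambda), which
  is the claimed inequality, and evaluation on one edge of each plateau shows that the tents are
  linearly independent.
*)

section \<open>Energy of affine functions\<close>

(* D2sq is computed from an arbitrary weak derivative (wderiv is defined by SOME), so its value
   on an affine function rests on the uniqueness of weak derivatives almost everywhere. *)

lemma finite_borel_measure_density_lborel:
  assumes "f \<in> borel_measurable lborel" "(\<integral>\<^sup>+x. ennreal (f x) \<partial>lborel) < \<infinity>"
  shows "finite_borel_measure (density lborel (\<lambda>x. ennreal (f x)))"
proof -
  have "finite_measure (density lborel (\<lambda>x. ennreal (f x)))"
    by (rule finite_measureI) (use assms in \<open>auto simp: emeasure_density\<close>)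
  then show ?thesis
    by (simp add: finite_borel_measure_def finite_borel_measure_axioms_def)
qed

lemma cdf_density_lborel:
  assumes "f \<in> borel_measurable lborel"
  shows "cdf (density lborel (\<lambda>x. ennreal (f x))) t
           = enn2real (\<integral>\<^sup>+x. ennreal (indicator {..t} x * f x) \<partial>lborel)"
proof -
  have "(\<integral>\<^sup>+x. ennreal (f x) * indicator {..t} x \<partial>lborel)
      = (\<integral>\<^sup>+x. ennreal (indicator {..t} x * f x) \<partial>lborel)"
    by (intro nn_integral_cong) (auto split: split_indicator)
  then show ?thesis using assms by (simp add: cdf_def measure_def emeasure_density)
qed

lemma AE_lborel_eq_0_if_integral_atMost_eq_0:
  fixes g :: "real \<Rightarrow> real"
  assumes g: "integrable lborel g"
    and zero: "\<And>t. (LINT x|lborel. indicator {..t} x * g x) = 0"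
  shows "AE x in lborel. g x = 0"
proof -
  have gb: "g \<in> borel_measurable lborel" using g by auto
  have fin_pos: "(\<integral>\<^sup>+x. ennreal (g x) \<partial>lborel) < \<infinity>"
    and fin_neg: "(\<integral>\<^sup>+x. ennreal (- g x) \<partial>lborel) < \<infinity>"
    using g by (auto simp: real_integrable_def top.not_eq_extremum)
  \<comment> \<open>The positive and the negative part of \<open>g\<close> are densities of finite measures
     with the same distribution function.\<close>
  have "cdf (density lborel (\<lambda>x. ennreal (g x))) = cdf (density lborel (\<lambda>x. ennreal (- g x)))"
  proof
    fix t
    have "integrable lborel (\<lambda>x. indicator {..t} x * g x)"
      using integrable_real_mult_indicator[of "{..t}" lborel g] g by (simp add: mult.commute)
    then show "cdf (density lborel (\<lambda>x. ennreal (g x))) t = cdf (density lborel (\<lambda>x. ennreal (- g x))) t"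
      using zero[of t] gb by (simp add: cdf_density_lborel real_lebesgue_integral_def)
  qed
  then have "density lborel (\<lambda>x. ennreal (g x)) = density lborel (\<lambda>x. ennreal (- g x))"
    using cdf_unique' finite_borel_measure_density_lborel fin_pos fin_neg gb
    by (metis borel_measurable_uminus)
  then have "AE x in lborel. ennreal (g x) = ennreal (- g x)"
    by (subst (asm) finite_density_unique) (use gb fin_pos in auto)
  then show ?thesis
  proof eventually_elim
    case (elim x)
    then show "g x = 0" by (cases "0 \<le> g x") (auto simp: ennreal_neg)
  qed
qed

lemma AE_lebesgue_eq_0_if_integral_atMost_eq_0:
  fixes H :: "real \<Rightarrow> real"
  assumes H: "integrable lebesgue H"
    and zero: "\<And>t. (LINT x|lebesgue. indicator {..t} x * H x) = 0"
  shows "AE x in lebesgue. H x = 0"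
proof -
  have Hb: "H \<in> borel_measurable lebesgue" using H by auto
  then obtain g where gb: "g \<in> borel_measurable lborel" and "AE x in lborel. H x = g x"
    using completion_ex_borel_measurable_real by blast
  then have Hg: "AE x in lebesgue. H x = g x" by (intro AE_completion) auto
  have "integrable lebesgue g"
    using integrable_cong_AE_imp[OF H measurable_completion[OF gb] Hg] .
  then have g: "integrable lborel g" using gb by (simp add: integrable_completion)
  have "(LINT x|lborel. indicator {..t} x * g x) = 0" for t
  proof -
    have tb: "(\<lambda>x. indicator {..t} x * g x) \<in> borel_measurable lborel" using gb by measurable
    have "(LINT x|lborel. indicator {..t} x * g x) = (LINT x|lebesgue. indicator {..t} x * g x)"
      using tb by (simp add: integral_completion)
    also have "\<dots> = (LINT x|lebesgue. indicator {..t} x * H x)"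
    proof (rule integral_cong_AE)
      show "(\<lambda>x. indicator {..t} x * g x) \<in> borel_measurable lebesgue"
        by (rule measurable_completion[OF tb])
      show "(\<lambda>x. indicator {..t} x * H x) \<in> borel_measurable lebesgue"
        by (intro borel_measurable_times borel_measurable_indicator Hb) auto
      show "AE x in lebesgue. indicator {..t} x * g x = indicator {..t} x * H x"
        using Hg by eventually_elim simp
    qed
    finally show ?thesis using zero by simp
  qed
  then have "AE x in lborel. g x = 0" using g by (rule AE_lborel_eq_0_if_integral_atMost_eq_0[rotated])
  then show ?thesis using Hg by (auto dest: AE_completion)
qed

lemma negligible_nonzero_if_indefinite_integral_eq_0:
  fixes h :: "real \<Rightarrow> real"
  assumes h: "h absolutely_integrable_on {0..l}"
    and zero: "\<And>x. x \<in> {0..l} \<Longrightarrow> integral {0..x} h = 0"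
  shows "negligible {x \<in> {0..l}. h x \<noteq> 0}"
proof -
  define H where "H = (\<lambda>x. indicator {0..l} x * h x)"
  have H: "integrable lebesgue H" using h by (simp add: set_integrable_def H_def)
  have "(LINT x|lebesgue. indicator {..t} x * H x) = 0" for t
  proof -
    have "(LINT x|lebesgue. indicator {..t} x * H x) = (LINT x:{0..min t l}|lebesgue. h x)"
      by (auto simp: set_lebesgue_integral_def H_def split: split_indicator
          intro!: Bochner_Integration.integral_cong)
    also have "\<dots> = integral {0..min t l} h"
      using set_integrable_subset[OF h] by (intro set_lebesgue_integral_eq_integral(2)) auto
    also have "\<dots> = 0"
      using zero[of "min t l"] by (cases "0 \<le> min t l") auto
    finally show ?thesis .
  qed
  then have "AE x in lebesgue. H x = 0" using H by (rule AE_lebesgue_eq_0_if_integral_atMost_eq_0[rotated])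
  moreover have "{x \<in> space lebesgue. H x \<noteq> 0} \<in> sets lebesgue"
    using H by measurable
  ultimately have "{x \<in> space lebesgue. H x \<noteq> 0} \<in> null_sets lebesgue"
    by (subst (asm) AE_iff_null) auto
  moreover have "{x \<in> space lebesgue. H x \<noteq> 0} = {x \<in> {0..l}. h x \<noteq> 0}"
    by (auto simp: H_def split: split_indicator)
  ultimately show ?thesis using negligible_iff_null_sets by metis
qed

lemma weak_deriv_on_affine:
  assumes "0 \<le> l" and "\<And>x. x \<in> {0..l} \<Longrightarrow> f x = a + s * x"
  shows "weak_deriv_on l f (\<lambda>_. s)"
  unfolding weak_deriv_on_def
proof (intro conjI ballI)
  show "(\<lambda>_. s) absolutely_integrable_on {0..l}" by (rule absolutely_integrable_on_const) simp
  show "(\<lambda>x. s\<^sup>2) integrable_on {0..l}" by (rule integrable_const_ivl)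
  fix x assume x: "x \<in> {0..l}"
  then show "f x = f 0 + integral {0..x} (\<lambda>_. s)" using assms(1) assms(2)[OF x] assms(2)[of 0] by auto
qed

lemma integral_weak_deriv_sq_affine:
  assumes l: "0 \<le> l" and g: "weak_deriv_on l f g"
    and f: "\<And>x. x \<in> {0..l} \<Longrightarrow> f x = a + s * x"
  shows "integral {0..l} (\<lambda>x. (g x)\<^sup>2) = s\<^sup>2 * l"
proof -
  have g_abs: "g absolutely_integrable_on {0..l}"
    and g_int: "\<And>x. x \<in> {0..l} \<Longrightarrow> f x = f 0 + integral {0..x} g"
    using g unfolding weak_deriv_on_def by blast+
  have "integral {0..x} (\<lambda>y. g y - s) = 0" if x: "x \<in> {0..l}" for x
  proof -
    have "g integrable_on {0..x}"
      using x by (intro integrable_on_subinterval[OF set_lebesgue_integral_eq_integral(1)[OF g_abs]]) auto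
    then have "integral {0..x} (\<lambda>y. g y - s) = integral {0..x} g - integral {0..x} (\<lambda>_. s)"
      by (rule integral_diff[OF _ integrable_const_ivl])
    also have "\<dots> = s * x - s * x" using g_int[OF x] f[OF x] f[of 0] l x by (simp add: mult.commute)
    finally show ?thesis by simp
  qed
  moreover have "(\<lambda>y. g y - s) absolutely_integrable_on {0..l}"
    using g_abs by (intro set_integral_diff(1)) auto
  ultimately have "negligible {x \<in> {0..l}. g x - s \<noteq> 0}"
    by (intro negligible_nonzero_if_indefinite_integral_eq_0)
  then have "integral {0..l} (\<lambda>x. (g x)\<^sup>2) = integral {0..l} (\<lambda>x. s\<^sup>2)"
    by (rule integral_spike) auto
  then show ?thesis using l by simp
qed

lemma integral_wderiv_sq_affine:
  assumes "0 \<le> l" and "\<And>x. x \<in> {0..l} \<Longrightarrow> f x = a + s * x"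
  shows "integral {0..l} (\<lambda>x. (wderiv l f x)\<^sup>2) = s\<^sup>2 * l"
proof -
  have "weak_deriv_on l f (\<lambda>_. s)" using assms by (rule weak_deriv_on_affine)
  then have "weak_deriv_on l f (wderiv l f)" unfolding wderiv_def by (rule someI[where P = "weak_deriv_on l f"])
  then show ?thesis using assms(2) by (rule integral_weak_deriv_sq_affine[OF assms(1)])
qed

section \<open>Piecewise linear functions on a metric graph\<close>

definition lin_interp :: "('v, 'e) mgraph \<Rightarrow> ('v \<Rightarrow> real) \<Rightarrow> 'e \<Rightarrow> real \<Rightarrow> real" where
  "lin_interp G h e x = (if e \<in> edges G \<and> x \<in> {0..len G e}
      then h (src G e) + (h (tgt G e) - h (src G e)) / len G e * x else 0)"

lemma lin_interp_sum:
  "lin_interp G (\<lambda>v. \<Sum>j\<in>J. a j * h j v) e x = (\<Sum>j\<in>J. a j * lin_interp G (h j) e x)"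
proof (cases "e \<in> edges G \<and> x \<in> {0..len G e}")
  case True
  then show ?thesis
    by (simp add: lin_interp_def sum_distrib_right sum.distrib ring_distribs mult.assoc
        sum_subtractf sum_divide_distrib diff_divide_distrib)
qed (auto simp: lin_interp_def)

lemma lin_interp_endpoint:
  assumes "e \<in> edges G" "0 < len G e" "a \<in> {0, len G e}"
  shows "lin_interp G h e a = h (endpt G e a)"
  using assms by (auto simp: lin_interp_def endpt_def)

lemma weak_deriv_on_lin_interp:
  assumes "e \<in> edges G" "0 < len G e"
  shows "weak_deriv_on (len G e) (lin_interp G h e) (\<lambda>_. (h (tgt G e) - h (src G e)) / len G e)"
  using assms by (intro weak_deriv_on_affine) (auto simp: lin_interp_def)

lemma integral_wderiv_lin_interp_sq:
  assumes "e \<in> edges G" "0 < len G e"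
  shows "integral {0..len G e} (\<lambda>x. (wderiv (len G e) (lin_interp G h e) x)\<^sup>2)
      = (h (tgt G e) - h (src G e))\<^sup>2 / len G e"
proof -
  have "integral {0..len G e} (\<lambda>x. (wderiv (len G e) (lin_interp G h e) x)\<^sup>2)
      = ((h (tgt G e) - h (src G e)) / len G e)\<^sup>2 * len G e"
    using assms by (intro integral_wderiv_sq_affine) (auto simp: lin_interp_def)
  then show ?thesis using assms by (simp add: power2_eq_square)
qed

lemma integral_lin_interp_sq_const:
  assumes "e \<in> edges G" "0 \<le> len G e" "h (src G e) = a" "h (tgt G e) = a"
  shows "integral {0..len G e} (\<lambda>x. (lin_interp G h e x)\<^sup>2) = a\<^sup>2 * len G e"
proof -
  have "integral {0..len G e} (\<lambda>x. (lin_interp G h e x)\<^sup>2) = integral {0..len G e} (\<lambda>x. a\<^sup>2)"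
    by (rule integral_cong) (use assms in \<open>auto simp: lin_interp_def\<close>)
  then show ?thesis using assms by simp
qed

lemma integral_lin_interp_sq_nonneg: "0 \<le> integral {0..len G e} (\<lambda>x. (lin_interp G h e x)\<^sup>2)"
proof (cases "e \<in> edges G")
  case True
  have "(\<lambda>x. (h (src G e) + (h (tgt G e) - h (src G e)) / len G e * x)\<^sup>2) integrable_on {0..len G e}"
    by (intro integrable_continuous_interval continuous_intros)
  then have "(\<lambda>x. (lin_interp G h e x)\<^sup>2) integrable_on {0..len G e}"
    by (rule integrable_eq) (simp add: lin_interp_def True)
  then show ?thesis by (rule integral_nonneg) simp
qed (simp add: lin_interp_def)

context
  fixes G :: "('v, 'e) mgraph" and S :: "'e set" and h :: "'v \<Rightarrow> real"
  assumes len_pos: "\<And>e. e \<in> edges G \<Longrightarrow> 0 < len G e"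
    and S: "finite S" "S \<subseteq> edges G"
    and vanish: "\<And>e. e \<in> edges G - S \<Longrightarrow> h (src G e) = 0 \<and> h (tgt G e) = 0"
begin

lemma has_sum_lin_interp_D2:
  "((\<lambda>e. integral {0..len G e} (\<lambda>x. (wderiv (len G e) (lin_interp G h e) x)\<^sup>2))
     has_sum (\<Sum>e\<in>S. (h (tgt G e) - h (src G e))\<^sup>2 / len G e)) (edges G)"
proof (rule has_sum_finite_neutralI[OF S])
  show "integral {0..len G e} (\<lambda>x. (wderiv (len G e) (lin_interp G h e) x)\<^sup>2) = 0"
    if "e \<in> edges G - S" for e
    using that vanish[OF that] len_pos by (simp add: integral_wderiv_lin_interp_sq)
qed (use S len_pos in \<open>auto intro!: sum.cong simp: integral_wderiv_lin_interp_sq\<close>)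

lemma has_sum_lin_interp_L2:
  "((\<lambda>e. integral {0..len G e} (\<lambda>x. (lin_interp G h e x)\<^sup>2))
     has_sum (\<Sum>e\<in>S. integral {0..len G e} (\<lambda>x. (lin_interp G h e x)\<^sup>2))) (edges G)"
proof (rule has_sum_finite_neutralI[OF S])
  show "integral {0..len G e} (\<lambda>x. (lin_interp G h e x)\<^sup>2) = 0" if "e \<in> edges G - S" for e
    using integral_lin_interp_sq_const[of e G h 0] that vanish[OF that] len_pos[of e] by simp
qed simp

lemma lin_interp_in_H1: "lin_interp G h \<in> H1 G"
  unfolding H1_def mem_Collect_eq
proof (intro conjI ballI allI impI)
  fix e assume e: "e \<in> edges G"
  show "\<exists>g. weak_deriv_on (len G e) (lin_interp G h e) g"
    using weak_deriv_on_lin_interp[OF e len_pos[OF e]] by blast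
next
  fix e1 e2 a1 a2
  assume "e1 \<in> edges G" "e2 \<in> edges G" "a1 \<in> {0, len G e1}" "a2 \<in> {0, len G e2}"
    and "endpt G e1 a1 = endpt G e2 a2"
  then show "lin_interp G h e1 a1 = lin_interp G h e2 a2"
    using len_pos by (simp add: lin_interp_endpoint)
next
  show "(\<lambda>e. integral {0..len G e} (\<lambda>x. (lin_interp G h e x)\<^sup>2)) summable_on edges G"
    using has_sum_lin_interp_L2 by (auto simp: has_sum_iff)
  show "(\<lambda>e. integral {0..len G e} (\<lambda>x. (wderiv (len G e) (lin_interp G h e) x)\<^sup>2)) summable_on edges G"
    using has_sum_lin_interp_D2 by (auto simp: has_sum_iff)
qed (auto simp: lin_interp_def)

lemma D2sq_lin_interp:
  "D2sq G (lin_interp G h) = (\<Sum>e\<in>S. (h (tgt G e) - h (src G e))\<^sup>2 / len G e)"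
  using has_sum_lin_interp_D2 by (simp add: D2sq_def has_sum_iff)

lemma L2sq_lin_interp:
  "L2sq G (lin_interp G h) = (\<Sum>e\<in>S. integral {0..len G e} (\<lambda>x. (lin_interp G h e x)\<^sup>2))"
  using has_sum_lin_interp_L2 by (simp add: L2sq_def has_sum_iff)

end

lemma vector_space_fscale: "vector_space (fscale :: real \<Rightarrow> ('e \<Rightarrow> real \<Rightarrow> real) \<Rightarrow> _)"
  by unfold_locales (simp_all add: fscale_def fun_eq_iff algebra_simps)

lemma sum_fun_apply: "(\<Sum>i\<in>I. f i) x = (\<Sum>i\<in>I. f i x)"
  by (induction I rule: infinite_finite_induct) auto

lemma exists_subspace_dim_if_dual_points:
  fixes w :: "nat \<Rightarrow> 'e \<Rightarrow> real \<Rightarrow> real" and p :: "nat \<Rightarrow> 'e" and t :: "nat \<Rightarrow> real"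
  assumes dual: "\<And>i j. i < n \<Longrightarrow> j < n \<Longrightarrow> w j (p i) (t i) = (if i = j then 1 else 0)"
    and P: "\<And>a. P (\<lambda>e x. \<Sum>j<n. a j * w j e x)"
  shows "\<exists>Y. module.subspace fscale Y \<and> vector_space.dim fscale Y = n \<and> (\<forall>y\<in>Y. P y)"
proof -
  interpret V: vector_space "fscale :: real \<Rightarrow> ('e \<Rightarrow> real \<Rightarrow> real) \<Rightarrow> _"
    by (rule vector_space_fscale)
  have inj: "inj_on w {..<n}"
  proof (rule inj_onI)
    fix i j assume "i \<in> {..<n}" "j \<in> {..<n}" "w i = w j"
    then show "i = j" using dual[of i i] dual[of i j] by (auto split: if_splits)
  qed
  define B where "B = w ` {..<n}"
  have comb: "(\<Sum>v\<in>B. fscale (u v) v) = (\<lambda>e x. \<Sum>j<n. u (w j) * w j e x)" for u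
    unfolding B_def by (simp add: sum.reindex[OF inj] sum_fun_apply fscale_def fun_eq_iff)
  have fin: "finite B" by (simp add: B_def)
  have "\<not> V.dependent B"
  proof
    assume "V.dependent B"
    then obtain u where u: "\<exists>v\<in>B. u v \<noteq> 0" and lc: "(\<Sum>v\<in>B. fscale (u v) v) = 0"
      using V.dependent_finite[OF fin] by blast
    have zero: "(\<Sum>j<n. u (w j) * w j (p i) (t i)) = 0" for i
      using fun_cong[OF fun_cong[OF lc[unfolded comb]], of "p i" "t i"] by simp
    have eval: "(\<Sum>j<n. u (w j) * w j (p i) (t i)) = u (w i)" if "i < n" for i
    proof -
      have "(\<Sum>j<n. u (w j) * w j (p i) (t i)) = (\<Sum>j<n. if i = j then u (w j) else 0)"
        using that by (intro sum.cong) (simp_all add: dual)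
      then show ?thesis using that by simp
    qed
    from u obtain i where "i < n" "u (w i) \<noteq> 0" unfolding B_def by blast
    then show False using zero[of i] eval[of i] by simp
  qed
  then have "V.dim (V.span B) = n"
    using V.dim_span_eq_card_independent card_image[OF inj] by (simp add: B_def)
  moreover have "P y" if "y \<in> V.span B" for y
    using that P unfolding V.span_finite[OF fin] comb by auto
  ultimately show ?thesis by blast
qed

section \<open>Lattice geometry\<close>

lemma Zd_add [simp]: "k \<in> Zd d \<Longrightarrow> l \<in> Zd d \<Longrightarrow> k + l \<in> Zd d"
  and Zd_uminus [simp]: "k \<in> Zd d \<Longrightarrow> - k \<in> Zd d"
  and Zd_diff [simp]: "k \<in> Zd d \<Longrightarrow> l \<in> Zd d \<Longrightarrow> k - l \<in> Zd d"
  by (simp_all add: Zd_def)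

definition supnorm :: "nat \<Rightarrow> (nat \<Rightarrow> int) \<Rightarrow> nat" where
  "supnorm d k = Max (insert 0 ((\<lambda>i. nat \<bar>k i\<bar>) ` {..<d}))"

lemma supnorm_le_iff: "supnorm d k \<le> r \<longleftrightarrow> (\<forall>i<d. \<bar>k i\<bar> \<le> int r)"
  by (auto simp: supnorm_def nat_le_iff)

lemma abs_le_supnorm: "i < d \<Longrightarrow> \<bar>k i\<bar> \<le> int (supnorm d k)"
  using supnorm_le_iff[of d k "supnorm d k"] by blast

lemma supnorm_add_le: "supnorm d (k + l) \<le> supnorm d k + supnorm d l"
  unfolding supnorm_le_iff
  using abs_le_supnorm[of _ d k] abs_le_supnorm[of _ d l] by (force intro: abs_triangle_ineq order.trans)

lemma supnorm_minus_commute: "supnorm d (k - l) = supnorm d (l - k)"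
  by (simp add: supnorm_def abs_minus_commute)

lemma supnorm_diff_triangle:
  fixes a b c :: "nat \<Rightarrow> int"
  shows "supnorm d (a - c) \<le> supnorm d (a - b) + supnorm d (b - c)"
  using supnorm_add_le[of d "a - b" "b - c"] by simp

definition cube :: "nat \<Rightarrow> (nat \<Rightarrow> int) \<Rightarrow> nat \<Rightarrow> (nat \<Rightarrow> int) set" where
  "cube d c r = {k \<in> Zd d. supnorm d (k - c) \<le> r}"

lemma bij_betw_restrict_cube:
  "bij_betw (\<lambda>k. restrict k {..<d}) (cube d c r) (PiE {..<d} (\<lambda>i. {c i - int r..c i + int r}))"
proof (rule bij_betw_imageI)
  show "inj_on (\<lambda>k. restrict k {..<d}) (cube d c r)"
  proof (rule inj_onI, rule ext)
    fix k l i assume "k \<in> cube d c r" "l \<in> cube d c r" "restrict k {..<d} = restrict l {..<d}"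
    then show "k i = l i"
      by (cases "i < d") (auto simp: cube_def Zd_def dest: fun_cong[of _ _ i])
  qed
  show "(\<lambda>k. restrict k {..<d}) ` cube d c r = PiE {..<d} (\<lambda>i. {c i - int r..c i + int r})"
  proof
    show "(\<lambda>k. restrict k {..<d}) ` cube d c r \<subseteq> PiE {..<d} (\<lambda>i. {c i - int r..c i + int r})"
      by (intro image_subsetI) (auto simp: restrict_PiE_iff cube_def supnorm_le_iff abs_le_iff)
    show "PiE {..<d} (\<lambda>i. {c i - int r..c i + int r}) \<subseteq> (\<lambda>k. restrict k {..<d}) ` cube d c r"
    proof
      fix p assume p: "p \<in> PiE {..<d} (\<lambda>i. {c i - int r..c i + int r})"
      define k where "k i = (if i < d then p i else 0)" for i
      have "\<forall>i<d. c i - int r \<le> p i \<and> p i \<le> c i + int r"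
        using p by (auto simp: PiE_iff)
      then have "k \<in> cube d c r"
        by (auto simp: k_def cube_def Zd_def supnorm_le_iff abs_le_iff)
      moreover have "restrict k {..<d} = p"
        using p by (auto simp: k_def PiE_iff restrict_def extensional_def)
      ultimately show "p \<in> (\<lambda>k. restrict k {..<d}) ` cube d c r" by blast
    qed
  qed
qed

lemma finite_cube: "finite (cube d c r)"
  and card_cube: "card (cube d c r) = (2 * r + 1) ^ d"
  using bij_betw_finite[OF bij_betw_restrict_cube] bij_betw_same_card[OF bij_betw_restrict_cube]
  by (auto simp: card_PiE prod_constant nat_add_distrib nat_mult_distrib intro: finite_PiE)

locale free_Zd_action =
  fixes d :: nat and act :: "(nat \<Rightarrow> int) \<Rightarrow> 'x \<Rightarrow> 'x" and X :: "'x set"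
  assumes act_zero: "x \<in> X \<Longrightarrow> act 0 x = x"
    and act_add: "k \<in> Zd d \<Longrightarrow> l \<in> Zd d \<Longrightarrow> x \<in> X \<Longrightarrow> act (k + l) x = act k (act l x)"
    and act_free: "k \<in> Zd d \<Longrightarrow> k \<noteq> 0 \<Longrightarrow> x \<in> X \<Longrightarrow> act k x \<noteq> x"
begin

lemma act_diff_if_act_eq:
  assumes "k \<in> Zd d" "l \<in> Zd d" "x \<in> X" "y \<in> X" "act k x = act l y"
  shows "act (k - l) x = y"
proof -
  have "act (k - l) x = act (- l) (act k x)"
    using assms act_add[of "- l" k x] by simp
  also have "\<dots> = act (- l) (act l y)" using assms by simp
  also have "\<dots> = y"
    using assms act_add[of "- l" l y] act_zero by simp
  finally show ?thesis .
qed

lemma act_inj: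
  assumes "k \<in> Zd d" "l \<in> Zd d" "x \<in> X" "act k x = act l x"
  shows "k = l"
  using act_diff_if_act_eq[OF assms(1-3,3,4)] act_free[of "k - l" x] assms by auto

end

lemma exists_radius_ratio_le:
  fixes s d :: nat and K \<epsilon> :: real
  assumes "0 < \<epsilon>" "0 \<le> K"
  shows "\<exists>m>0. s \<le> m \<and> K / (real m)\<^sup>2 * real ((2 * (2 * m + s) + 1) ^ d)
                          \<le> \<epsilon> * real ((2 * (m - s) + 1) ^ d)"
proof -
  obtain m :: nat where "max (real (2 * s + 1)) (K * 5 ^ d / \<epsilon>) \<le> m"
    using real_arch_simple by blast
  then have m: "2 * s + 1 \<le> m" "K * 5 ^ d / \<epsilon> \<le> m"
    by (simp_all only: max.bounded_iff of_nat_le_iff)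
  then have m_pos: "0 < real m" by simp
  have "(2 * (2 * m + s) + 1) ^ d \<le> (5 * m) ^ d"
    using m(1) by (intro power_mono) auto
  then have near: "real ((2 * (2 * m + s) + 1) ^ d) \<le> (5 * real m) ^ d"
    by (metis of_nat_le_iff of_nat_mult of_nat_numeral of_nat_power)
  have "m ^ d \<le> (2 * (m - s) + 1) ^ d"
    using m(1) by (intro power_mono) auto
  then have within: "real m ^ d \<le> real ((2 * (m - s) + 1) ^ d)"
    by (metis of_nat_le_iff of_nat_power)
  have "K / (real m)\<^sup>2 * real ((2 * (2 * m + s) + 1) ^ d) \<le> K / (real m)\<^sup>2 * (5 * real m) ^ d"
    using near assms by (intro mult_left_mono) auto
  also have "\<dots> = K * 5 ^ d / real m * (real m ^ d / real m)"
    using m_pos by (simp add: power_mult_distrib power2_eq_square)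
  also have "\<dots> \<le> \<epsilon> * (real m ^ d / real m)"
    using m(2) m_pos assms by (intro mult_right_mono) (auto simp: divide_le_eq mult.commute)
  also have "\<dots> \<le> \<epsilon> * real m ^ d"
    using m_pos assms by (intro mult_left_mono) (auto simp: divide_le_eq intro: order.trans[OF _ mult_right_mono[of 1]])
  also have "\<dots> \<le> \<epsilon> * real ((2 * (m - s) + 1) ^ d)"
    using within assms by simp
  finally show ?thesis using m(1) by (intro exI[of _ m]) auto
qed

lemma abs_clamp_diff_le: "\<bar>max 0 (min 1 x) - max 0 (min 1 y)\<bar> \<le> \<bar>x - y\<bar>" for x y :: real
  by (auto simp: max_def min_def abs_if)

definition centre :: "nat \<Rightarrow> nat \<Rightarrow> nat \<Rightarrow> int" where
  "centre m j = (\<lambda>i. if i = 0 then int (3 * m * j) else 0)"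

lemma supnorm_centre_diff_ge:
  assumes "0 < d" "i \<noteq> j"
  shows "3 * m \<le> supnorm d (centre m i - centre m j)"
proof -
  have "\<bar>(centre m i - centre m j) 0\<bar> \<le> int (supnorm d (centre m i - centre m j))"
    using assms(1) by (rule abs_le_supnorm)
  moreover have "\<bar>(centre m i - centre m j) 0\<bar> = int (3 * m) * \<bar>int i - int j\<bar>"
    by (simp add: centre_def abs_mult flip: right_diff_distrib)
  moreover have "int (3 * m) * 1 \<le> int (3 * m) * \<bar>int i - int j\<bar>"
    using assms(2) by (intro mult_left_mono) auto
  ultimately have "int (3 * m) \<le> int (supnorm d (centre m i - centre m j))" by linarith
  then show ?thesis by simp
qed

section \<open>Lattice coordinates on a periodic graph\<close>

locale periodic_graph =
  vertex: free_Zd_action d \<phi> "verts G" + edge: free_Zd_action d \<psi> "edges G"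
  for G :: "('v, 'e) mgraph" and d :: nat
    and \<phi> :: "(nat \<Rightarrow> int) \<Rightarrow> 'v \<Rightarrow> 'v" and \<psi> :: "(nat \<Rightarrow> int) \<Rightarrow> 'e \<Rightarrow> 'e" +
  fixes FE :: "'e set" and FV :: "'v set"
  assumes class_G: "class_G G" and infinite_edges: "infinite (edges G)"
    and aut: "\<And>k. k \<in> Zd d \<Longrightarrow> isom_aut G (\<phi> k) (\<psi> k)"
    and FE: "finite FE" "FE \<subseteq> edges G"
    and FE_orbits: "\<And>e. e \<in> edges G \<Longrightarrow> \<exists>k\<in>Zd d. \<exists>f\<in>FE. \<psi> k f = e"
    and FV: "finite FV" "FV \<subseteq> verts G"
    and FV_orbits: "\<And>v. v \<in> verts G \<Longrightarrow> \<exists>k\<in>Zd d. \<exists>g\<in>FV. \<phi> k g = v"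

lemma periodic_graph_if_periodic:
  assumes "periodic G"
  obtains d \<phi> \<psi> FE FV where "periodic_graph G d \<phi> \<psi> FE FV"
proof -
  obtain d \<phi> \<psi> FE FV where
      aut: "\<forall>k\<in>Zd d. isom_aut G (\<phi> k) (\<psi> k)"
    and zero: "\<forall>v\<in>verts G. \<phi> 0 v = v" "\<forall>e\<in>edges G. \<psi> 0 e = e"
    and add: "\<forall>k\<in>Zd d. \<forall>l\<in>Zd d. (\<forall>v\<in>verts G. \<phi> (k + l) v = \<phi> k (\<phi> l v)) \<and>
                                 (\<forall>e\<in>edges G. \<psi> (k + l) e = \<psi> k (\<psi> l e))"
    and free: "\<forall>k\<in>Zd d. k \<noteq> 0 \<longrightarrow> (\<forall>v\<in>verts G. \<phi> k v \<noteq> v) \<and> (\<forall>e\<in>edges G. \<psi> k e \<noteq> e)"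
    and FE: "finite FE" "FE \<subseteq> edges G" "\<forall>e\<in>edges G. \<exists>k\<in>Zd d. \<exists>f\<in>FE. \<psi> k f = e"
    and FV: "finite FV" "FV \<subseteq> verts G" "\<forall>v\<in>verts G. \<exists>k\<in>Zd d. \<exists>g\<in>FV. \<phi> k g = v"
    using assms unfolding periodic_def by (elim conjE exE) (rule that; assumption)
  have "periodic_graph G d \<phi> \<psi> FE FV"
    by unfold_locales (use assms aut zero add free FE FV in \<open>auto simp: periodic_def\<close>)
  then show ?thesis by (rule that)
qed

context periodic_graph
begin

lemma len_pos: "e \<in> edges G \<Longrightarrow> 0 < len G e"
  and src_in_verts: "e \<in> edges G \<Longrightarrow> src G e \<in> verts G"
  and tgt_in_verts: "e \<in> edges G \<Longrightarrow> tgt G e \<in> verts G"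
  using class_G by (auto simp: class_G_def)

lemma \<psi>_in_edges: "k \<in> Zd d \<Longrightarrow> e \<in> edges G \<Longrightarrow> \<psi> k e \<in> edges G"
  using aut[of k] by (auto simp: isom_aut_def bij_betw_def)

lemma endpoints_\<psi>:
  "k \<in> Zd d \<Longrightarrow> e \<in> edges G \<Longrightarrow> {src G (\<psi> k e), tgt G (\<psi> k e)} = \<phi> k ` {src G e, tgt G e}"
  using aut[of k] unfolding isom_aut_def by auto

lemma d_pos: "0 < d"
proof (rule ccontr)
  assume "\<not> 0 < d"
  then have "Zd d = {0}" by (auto simp: Zd_def)
  then have "edges G \<subseteq> FE" using FE_orbits FE edge.act_zero by fastforce
  then show False using FE(1) infinite_edges finite_subset by blast
qed

definition min_len :: real where
  "min_len = (INF e\<in>edges G. len G e)"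

lemma min_len_pos: "0 < min_len"
  and min_len_le: "e \<in> edges G \<Longrightarrow> min_len \<le> len G e"
proof -
  obtain c where c: "0 < c" "\<And>e. e \<in> edges G \<Longrightarrow> c \<le> len G e"
    using class_G unfolding class_G_def by blast
  have "edges G \<noteq> {}" using infinite_edges by auto
  then show "0 < min_len"
    unfolding min_len_def using c by (intro order.strict_trans2[OF c(1)] cINF_greatest) auto
  show "e \<in> edges G \<Longrightarrow> min_len \<le> len G e"
    unfolding min_len_def using c by (intro cINF_lower bdd_belowI2) auto
qed

definition coord :: "'v \<Rightarrow> nat \<Rightarrow> int" where
  "coord v = (SOME k. k \<in> Zd d \<and> (\<exists>g\<in>FV. \<phi> k g = v))"

lemma coord:
  assumes "v \<in> verts G"
  shows "coord v \<in> Zd d" and "\<exists>g\<in>FV. \<phi> (coord v) g = v"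
proof -
  have "\<exists>k. k \<in> Zd d \<and> (\<exists>g\<in>FV. \<phi> k g = v)" using FV_orbits[OF assms] by blast
  then have "coord v \<in> Zd d \<and> (\<exists>g\<in>FV. \<phi> (coord v) g = v)"
    unfolding coord_def by (rule someI_ex)
  then show "coord v \<in> Zd d" "\<exists>g\<in>FV. \<phi> (coord v) g = v" by blast+
qed

definition FV_transl :: "(nat \<Rightarrow> int) set" where
  "FV_transl = {j \<in> Zd d. \<exists>g\<in>FV. \<phi> j g \<in> FV}"

lemma finite_FV_transl: "finite FV_transl"
proof -
  have "FV_transl \<subseteq> (\<lambda>(g, g'). THE j. j \<in> Zd d \<and> \<phi> j g = g') ` (FV \<times> FV)"
  proof
    fix j assume "j \<in> FV_transl"
    then obtain g where g: "g \<in> FV" "\<phi> j g \<in> FV" and j: "j \<in> Zd d"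
      by (auto simp: FV_transl_def)
    have "(THE j'. j' \<in> Zd d \<and> \<phi> j' g = \<phi> j g) = j"
      using g j FV(2) vertex.act_inj by (intro the_equality) auto
    then show "j \<in> (\<lambda>(g, g'). THE j. j \<in> Zd d \<and> \<phi> j g = g') ` (FV \<times> FV)"
      using g by force
  qed
  then show ?thesis using FV(1) finite_subset by blast
qed

lemma coord_act_defect:
  assumes k: "k \<in> Zd d" and v: "v \<in> verts G"
  shows "coord (\<phi> k v) - (k + coord v) \<in> FV_transl"
proof -
  obtain g where g: "g \<in> FV" "\<phi> (coord v) g = v" using coord(2)[OF v] by blast
  have kv: "\<phi> k v \<in> verts G" using aut[OF k] v by (auto simp: isom_aut_def bij_betw_def)
  obtain g' where g': "g' \<in> FV" "\<phi> (coord (\<phi> k v)) g' = \<phi> k v" using coord(2)[OF kv] by blast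
  have "\<phi> (coord (\<phi> k v)) g' = \<phi> (k + coord v) g"
    using g g' k coord(1)[OF v] FV(2) vertex.act_add by auto
  then have "\<phi> (coord (\<phi> k v) - (k + coord v)) g' = g"
    using g g' k coord(1)[OF v] coord(1)[OF kv] FV(2) by (intro vertex.act_diff_if_act_eq) auto
  then show ?thesis
    using g g' k coord(1)[OF v] coord(1)[OF kv] by (auto simp: FV_transl_def)
qed

definition spread :: nat where
  "spread = (\<Sum>j\<in>FV_transl. supnorm d j)
            + (\<Sum>f\<in>FE. supnorm d (coord (src G f)) + supnorm d (coord (tgt G f)))"

lemma supnorm_coord_endpoint_le:
  assumes k: "k \<in> Zd d" and f: "f \<in> FE" and u: "u \<in> {src G (\<psi> k f), tgt G (\<psi> k f)}"
  shows "supnorm d (coord u - k) \<le> spread"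
proof -
  have fE: "f \<in> edges G" using f FE(2) by auto
  obtain x where x: "x \<in> {src G f, tgt G f}" and ux: "u = \<phi> k x"
    using u endpoints_\<psi>[OF k fE] by auto
  have xV: "x \<in> verts G" using x fE src_in_verts tgt_in_verts by auto
  have "coord u - k = (coord (\<phi> k x) - (k + coord x)) + coord x" by (simp add: ux)
  then have "supnorm d (coord u - k) \<le> supnorm d (coord (\<phi> k x) - (k + coord x)) + supnorm d (coord x)"
    by (metis supnorm_add_le)
  also have "supnorm d (coord (\<phi> k x) - (k + coord x)) \<le> (\<Sum>j\<in>FV_transl. supnorm d j)"
    by (rule member_le_sum[OF coord_act_defect[OF k xV] _ finite_FV_transl]) simp
  also have "supnorm d (coord x) \<le> supnorm d (coord (src G f)) + supnorm d (coord (tgt G f))"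
    using x by auto
  also have "\<dots> \<le> (\<Sum>f\<in>FE. supnorm d (coord (src G f)) + supnorm d (coord (tgt G f)))"
    using f FE(1) by (intro member_le_sum) auto
  finally show ?thesis by (simp add: spread_def)
qed

lemma supnorm_coord_edge_le:
  assumes "e \<in> edges G"
  shows "supnorm d (coord (tgt G e) - coord (src G e)) \<le> 2 * spread"
proof -
  obtain k f where k: "k \<in> Zd d" and f: "f \<in> FE" and e: "e = \<psi> k f"
    using FE_orbits[OF assms] by blast
  have "supnorm d (coord (tgt G e) - coord (src G e))
      \<le> supnorm d (coord (tgt G e) - k) + supnorm d (k - coord (src G e))"
    by (rule supnorm_diff_triangle)
  also have "\<dots> = supnorm d (coord (tgt G e) - k) + supnorm d (coord (src G e) - k)"
    using supnorm_minus_commute[of d k "coord (src G e)"] by simp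
  also have "\<dots> \<le> spread + spread"
    using supnorm_coord_endpoint_le[OF k f, of "tgt G e"] supnorm_coord_endpoint_le[OF k f, of "src G e"] e
    by (intro add_mono) auto
  finally show ?thesis by simp
qed

definition edges_near :: "(nat \<Rightarrow> int) \<Rightarrow> nat \<Rightarrow> 'e set" where
  "edges_near c r = {e \<in> edges G. supnorm d (coord (src G e) - c) \<le> r \<or> supnorm d (coord (tgt G e) - c) \<le> r}"

definition edges_within :: "(nat \<Rightarrow> int) \<Rightarrow> nat \<Rightarrow> 'e set" where
  "edges_within c r = {e \<in> edges G. supnorm d (coord (src G e) - c) \<le> r \<and> supnorm d (coord (tgt G e) - c) \<le> r}"

lemma edges_near_subset: "edges_near c r \<subseteq> (\<lambda>(k, f). \<psi> k f) ` (cube d c (r + spread) \<times> FE)"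
proof
  fix e assume "e \<in> edges_near c r"
  then obtain u where e: "e \<in> edges G" and u: "u \<in> {src G e, tgt G e}" and uc: "supnorm d (coord u - c) \<le> r"
    by (auto simp: edges_near_def)
  obtain k f where k: "k \<in> Zd d" and f: "f \<in> FE" and ke: "\<psi> k f = e"
    using FE_orbits[OF e] by blast
  have "supnorm d (k - c) \<le> supnorm d (k - coord u) + supnorm d (coord u - c)"
    by (rule supnorm_diff_triangle)
  also have "\<dots> \<le> spread + r"
    using supnorm_coord_endpoint_le[OF k f] u ke uc supnorm_minus_commute[of d k] by (intro add_mono) auto
  finally have "k \<in> cube d c (r + spread)" using k by (simp add: cube_def)
  then show "e \<in> (\<lambda>(k, f). \<psi> k f) ` (cube d c (r + spread) \<times> FE)" using f ke by force
qed

lemma finite_edges_near: "finite (edges_near c r)"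
  by (rule finite_subset[OF edges_near_subset]) (simp add: finite_cube FE(1))

lemma card_edges_near_le: "card (edges_near c r) \<le> (2 * (r + spread) + 1) ^ d * card FE"
proof -
  have "card (edges_near c r) \<le> card ((\<lambda>(k, f). \<psi> k f) ` (cube d c (r + spread) \<times> FE))"
    using edges_near_subset finite_cube FE(1) by (intro card_mono) auto
  also have "\<dots> \<le> card (cube d c (r + spread) \<times> FE)" by (rule card_image_le) (simp add: finite_cube FE(1))
  finally show ?thesis by (simp add: card_cartesian_product card_cube)
qed

lemma card_edges_within_ge:
  assumes "spread \<le> r"
  shows "(2 * (r - spread) + 1) ^ d \<le> card (edges_within c r)"
proof -
  obtain e0 where "e0 \<in> edges G" using infinite_edges by (metis finite.emptyI ex_in_conv)
  then obtain f0 where f0: "f0 \<in> FE" using FE_orbits by blast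
  have sub: "(\<lambda>k. \<psi> k f0) ` cube d c (r - spread) \<subseteq> edges_within c r"
  proof (rule image_subsetI)
    fix k assume "k \<in> cube d c (r - spread)"
    then have k: "k \<in> Zd d" "supnorm d (k - c) \<le> r - spread" by (auto simp: cube_def)
    have "supnorm d (coord u - c) \<le> r" if "u \<in> {src G (\<psi> k f0), tgt G (\<psi> k f0)}" for u
      using supnorm_diff_triangle[where d = d and a = "coord u" and b = k and c = c] supnorm_coord_endpoint_le[OF k(1) f0 that] k(2) assms
      by arith
    then show "\<psi> k f0 \<in> edges_within c r"
      using \<psi>_in_edges[OF k(1)] f0 FE(2) by (auto simp: edges_within_def)
  qed
  have inj: "inj_on (\<lambda>k. \<psi> k f0) (cube d c (r - spread))"
    using edge.act_inj f0 FE(2) by (intro inj_onI) (auto simp: cube_def)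
  have "finite (edges_within c r)"
    using finite_edges_near[of c r] by (rule finite_subset[rotated]) (auto simp: edges_within_def edges_near_def)
  from card_inj_on_le[OF inj sub this] show ?thesis by (simp add: card_cube)
qed

lemma edges_within_nonempty:
  assumes "spread \<le> r"
  shows "edges_within c r \<noteq> {}"
proof -
  have "0 < card (edges_within c r)"
    using card_edges_within_ge[OF assms, of c] by (rule order.strict_trans2[rotated]) simp
  then show ?thesis by auto
qed

section \<open>Tent functions\<close>

definition tent :: "nat \<Rightarrow> (nat \<Rightarrow> int) \<Rightarrow> 'v \<Rightarrow> real" where
  "tent m c v = max 0 (min 1 (2 - real (supnorm d (coord v - c)) / real m))"

lemma tent_eq_1: "0 < m \<Longrightarrow> supnorm d (coord v - c) \<le> m \<Longrightarrow> tent m c v = 1"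
  by (simp add: tent_def field_simps)

lemma tent_eq_0: "0 < m \<Longrightarrow> 2 * m \<le> supnorm d (coord v - c) \<Longrightarrow> tent m c v = 0"
  by (simp add: tent_def field_simps)

lemma tent_eq_0_if_far:
  assumes "0 < m" "supnorm d (coord v - c) \<le> m" "3 * m \<le> supnorm d (c - c')"
  shows "tent m c' v = 0"
proof (rule tent_eq_0)
  have "supnorm d (c - c') \<le> supnorm d (c - coord v) + supnorm d (coord v - c')"
    by (rule supnorm_diff_triangle)
  then show "2 * m \<le> supnorm d (coord v - c')"
    using assms supnorm_minus_commute[of d c "coord v"] by linarith
qed (use assms in simp)

lemma abs_tent_diff_le:
  assumes "0 < m"
  shows "\<bar>tent m c u - tent m c v\<bar> \<le> real (supnorm d (coord u - coord v)) / real m"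
proof -
  have "\<bar>tent m c u - tent m c v\<bar>
      \<le> \<bar>(2 - real (supnorm d (coord u - c)) / real m) - (2 - real (supnorm d (coord v - c)) / real m)\<bar>"
    unfolding tent_def by (rule abs_clamp_diff_le)
  also have "\<dots> = \<bar>real (supnorm d (coord v - c)) - real (supnorm d (coord u - c))\<bar> / real m"
    by (simp add: abs_divide flip: diff_divide_distrib)
  also have "\<dots> \<le> real (supnorm d (coord u - coord v)) / real m"
  proof (rule divide_right_mono)
    have "supnorm d (coord u - c) \<le> supnorm d (coord u - coord v) + supnorm d (coord v - c)"
      and "supnorm d (coord v - c) \<le> supnorm d (coord v - coord u) + supnorm d (coord u - c)"
      by (rule supnorm_diff_triangle)+
    then show "\<bar>real (supnorm d (coord v - c)) - real (supnorm d (coord u - c))\<bar>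
        \<le> real (supnorm d (coord u - coord v))"
      using supnorm_minus_commute[of d "coord u" "coord v"] by linarith
  qed simp
  finally show ?thesis .
qed

lemma abs_tent_edge_diff_le:
  assumes "0 < m" "e \<in> edges G"
  shows "\<bar>tent m c (tgt G e) - tent m c (src G e)\<bar> \<le> 2 * real spread / real m"
proof -
  have "\<bar>tent m c (tgt G e) - tent m c (src G e)\<bar>
      \<le> real (supnorm d (coord (tgt G e) - coord (src G e))) / real m"
    using assms(1) by (rule abs_tent_diff_le)
  also have "\<dots> \<le> 2 * real spread / real m"
    using supnorm_coord_edge_le[OF assms(2)] by (intro divide_right_mono) auto
  finally show ?thesis .
qed

lemma tent_endpoints_eq_0:
  assumes "0 < m" "e \<in> edges G - edges_near c (2 * m)"
  shows "tent m c (src G e) = 0" "tent m c (tgt G e) = 0"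
  using assms by (auto simp: edges_near_def intro: tent_eq_0)

definition tent_energy_bound :: "nat \<Rightarrow> real" where
  "tent_energy_bound m = real ((2 * (2 * m + spread) + 1) ^ d * card FE) * (2 * real spread / real m)\<^sup>2"

definition tent_mass_bound :: "nat \<Rightarrow> real" where
  "tent_mass_bound m = min_len * real ((2 * (m - spread) + 1) ^ d)"

lemma sum_tent_edge_diff_sq_le:
  assumes m: "0 < m" and S: "finite S" "edges_near c (2 * m) \<subseteq> S" "S \<subseteq> edges G"
  shows "(\<Sum>e\<in>S. (tent m c (tgt G e) - tent m c (src G e))\<^sup>2) \<le> tent_energy_bound m"
proof -
  have "(\<Sum>e\<in>S. (tent m c (tgt G e) - tent m c (src G e))\<^sup>2)
      = (\<Sum>e\<in>edges_near c (2 * m). (tent m c (tgt G e) - tent m c (src G e))\<^sup>2)"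
    using S tent_endpoints_eq_0[OF m] by (intro sum.mono_neutral_right) auto
  also have "\<dots> \<le> (\<Sum>e\<in>edges_near c (2 * m). (2 * real spread / real m)\<^sup>2)"
  proof (rule sum_mono)
    fix e assume "e \<in> edges_near c (2 * m)"
    then have "\<bar>tent m c (tgt G e) - tent m c (src G e)\<bar> \<le> 2 * real spread / real m"
      by (intro abs_tent_edge_diff_le m) (simp add: edges_near_def)
    then show "(tent m c (tgt G e) - tent m c (src G e))\<^sup>2 \<le> (2 * real spread / real m)\<^sup>2"
      by (metis abs_ge_zero order.trans power2_abs power_mono)
  qed
  also have "\<dots> = real (card (edges_near c (2 * m))) * (2 * real spread / real m)\<^sup>2"
    by simp
  also have "\<dots> \<le> tent_energy_bound m"
    unfolding tent_energy_bound_def using card_edges_near_le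
    by (intro mult_right_mono) (simp_all only: of_nat_le_iff zero_le_power2)
  finally show ?thesis .
qed

lemma exists_radius_energy_le_mass:
  fixes n :: nat and \<epsilon> :: real
  assumes "0 < \<epsilon>"
  shows "\<exists>m>0. spread \<le> m \<and> n / min_len * tent_energy_bound m \<le> \<epsilon> * tent_mass_bound m"
proof -
  define K where "K = n * (2 * real spread)\<^sup>2 * card FE / min_len\<^sup>2"
  have "0 \<le> K" unfolding K_def by (intro divide_nonneg_nonneg mult_nonneg_nonneg) auto
  then obtain m where m: "0 < m" "spread \<le> m"
    and ratio: "K / (real m)\<^sup>2 * real ((2 * (2 * m + spread) + 1) ^ d)
                   \<le> \<epsilon> * real ((2 * (m - spread) + 1) ^ d)"
    using exists_radius_ratio_le[OF assms] by blast
  have "n / min_len * tent_energy_bound m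
      = min_len * (K / (real m)\<^sup>2 * real ((2 * (2 * m + spread) + 1) ^ d))"
    using min_len_pos by (simp add: tent_energy_bound_def K_def field_simps power2_eq_square)
  also have "\<dots> \<le> \<epsilon> * tent_mass_bound m"
    using mult_left_mono[OF ratio, of min_len] min_len_pos by (simp add: tent_mass_bound_def mult_ac)
  finally show ?thesis using m by blast
qed

context
  fixes m n :: nat and cen :: "nat \<Rightarrow> nat \<Rightarrow> int" and a :: "nat \<Rightarrow> real"
  assumes m_pos: "0 < m"
begin

lemma finite_tents_support: "finite (\<Union>j<n. edges_near (cen j) (2 * m))"
  and tents_support_subset: "(\<Union>j<n. edges_near (cen j) (2 * m)) \<subseteq> edges G"
  by (auto simp: finite_edges_near) (auto simp: edges_near_def)

lemma tents_endpoints_eq_0: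
  assumes "e \<in> edges G - (\<Union>j<n. edges_near (cen j) (2 * m))"
  shows "(\<Sum>j<n. a j * tent m (cen j) (src G e)) = 0 \<and> (\<Sum>j<n. a j * tent m (cen j) (tgt G e)) = 0"
  using assms tent_endpoints_eq_0[OF m_pos] by auto

lemma lin_interp_tents_in_H1: "lin_interp G (\<lambda>v. \<Sum>j<n. a j * tent m (cen j) v) \<in> H1 G"
  using len_pos finite_tents_support tents_support_subset tents_endpoints_eq_0
  by (rule lin_interp_in_H1)

lemma D2sq_lin_interp_tents_le:
  "D2sq G (lin_interp G (\<lambda>v. \<Sum>j<n. a j * tent m (cen j) v))
     \<le> n / min_len * tent_energy_bound m * (\<Sum>j<n. (a j)\<^sup>2)"
proof -
  define S where "S = (\<Union>j<n. edges_near (cen j) (2 * m))"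
  define \<Delta> where "\<Delta> j e = tent m (cen j) (tgt G e) - tent m (cen j) (src G e)" for j e
  have edge_le: "(\<Sum>j<n. a j * \<Delta> j e)\<^sup>2 / len G e \<le> n / min_len * (\<Sum>j<n. (a j)\<^sup>2 * (\<Delta> j e)\<^sup>2)"
    if e: "e \<in> edges G" for e
  proof -
    have "(\<Sum>j<n. a j * \<Delta> j e)\<^sup>2 \<le> n * (\<Sum>j<n. (a j)\<^sup>2 * (\<Delta> j e)\<^sup>2)"
      using sum_squared_le_sum_of_squares[of "\<lambda>j. a j * \<Delta> j e" "{..<n}"]
      by (simp add: power_mult_distrib mult.commute)
    moreover have "0 \<le> n * (\<Sum>j<n. (a j)\<^sup>2 * (\<Delta> j e)\<^sup>2)"
      by (simp add: sum_nonneg)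
    ultimately show ?thesis
      using min_len_pos min_len_le[OF e] by (simp add: frac_le)
  qed
  have "D2sq G (lin_interp G (\<lambda>v. \<Sum>j<n. a j * tent m (cen j) v))
      = (\<Sum>e\<in>S. ((\<Sum>j<n. a j * tent m (cen j) (tgt G e)) - (\<Sum>j<n. a j * tent m (cen j) (src G e)))\<^sup>2
                  / len G e)"
    unfolding S_def
    by (rule D2sq_lin_interp[OF len_pos finite_tents_support tents_support_subset tents_endpoints_eq_0])
  also have "\<dots> = (\<Sum>e\<in>S. (\<Sum>j<n. a j * \<Delta> j e)\<^sup>2 / len G e)"
    by (simp add: \<Delta>_def sum_subtractf right_diff_distrib)
  also have "\<dots> \<le> (\<Sum>e\<in>S. n / min_len * (\<Sum>j<n. (a j)\<^sup>2 * (\<Delta> j e)\<^sup>2))"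
    using tents_support_subset by (intro sum_mono edge_le) (auto simp: S_def)
  also have "\<dots> = n / min_len * (\<Sum>j<n. (a j)\<^sup>2 * (\<Sum>e\<in>S. (\<Delta> j e)\<^sup>2))"
    by (simp add: sum_distrib_left sum.swap[of _ S])
  also have "\<dots> \<le> n / min_len * (\<Sum>j<n. (a j)\<^sup>2 * tent_energy_bound m)"
    using sum_tent_edge_diff_sq_le[OF m_pos finite_tents_support _ tents_support_subset] min_len_pos
    by (intro mult_left_mono sum_mono) (auto simp: S_def \<Delta>_def)
  also have "\<dots> = n / min_len * tent_energy_bound m * (\<Sum>j<n. (a j)\<^sup>2)"
    by (simp add: sum_distrib_left sum_divide_distrib mult_ac)
  finally show ?thesis .
qed

context
  assumes far: "\<And>i j. i < n \<Longrightarrow> j < n \<Longrightarrow> i \<noteq> j \<Longrightarrow> 3 * m \<le> supnorm d (cen i - cen j)"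
begin

lemma tent_on_edges_within:
  assumes "i < n" "j < n" "e \<in> edges_within (cen i) m" "u \<in> {src G e, tgt G e}"
  shows "tent m (cen j) u = (if j = i then 1 else 0)"
proof -
  have u: "supnorm d (coord u - cen i) \<le> m" using assms(3,4) by (auto simp: edges_within_def)
  show ?thesis
    using tent_eq_1[OF m_pos u] tent_eq_0_if_far[OF m_pos u far[OF assms(1,2)]] by auto
qed

lemma tents_on_edges_within:
  assumes "i < n" "e \<in> edges_within (cen i) m" "u \<in> {src G e, tgt G e}"
  shows "(\<Sum>j<n. a j * tent m (cen j) u) = a i"
proof -
  have "(\<Sum>j<n. a j * tent m (cen j) u) = (\<Sum>j<n. if j = i then a j else 0)"
    using tent_on_edges_within assms by (intro sum.cong) auto
  then show ?thesis using assms(1) by simp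
qed

lemma edges_within_disjoint:
  assumes "i < n" "j < n" "i \<noteq> j"
  shows "edges_within (cen i) m \<inter> edges_within (cen j) m = {}"
proof -
  have "tent m (cen j) (src G e) = 0" "tent m (cen j) (src G e) = 1"
    if "e \<in> edges_within (cen i) m" "e \<in> edges_within (cen j) m" for e
    using tent_on_edges_within[OF assms(1,2) that(1)] tent_on_edges_within[OF assms(2,2) that(2)] assms(3)
    by auto
  then show ?thesis by fastforce
qed

lemma L2sq_lin_interp_tents_ge:
  assumes "spread \<le> m"
  shows "tent_mass_bound m * (\<Sum>j<n. (a j)\<^sup>2) \<le> L2sq G (lin_interp G (\<lambda>v. \<Sum>j<n. a j * tent m (cen j) v))"
proof -
  define h where "h = (\<lambda>v. \<Sum>j<n. a j * tent m (cen j) v)"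
  define W where "W j = edges_within (cen j) m" for j
  define I where "I e = integral {0..len G e} (\<lambda>x. (lin_interp G h e x)\<^sup>2)" for e
  have W_sub: "(\<Union>j<n. W j) \<subseteq> (\<Union>j<n. edges_near (cen j) (2 * m))"
    by (auto simp: W_def edges_within_def edges_near_def)
  have finite_W: "finite (W j)" if "j < n" for j
    using W_sub finite_tents_support that by (blast intro: finite_subset)
  have W_le: "(a j)\<^sup>2 * tent_mass_bound m \<le> (\<Sum>e\<in>W j. I e)" if j: "j < n" for j
  proof -
    have "real ((2 * (m - spread) + 1) ^ d) \<le> real (card (W j))"
      unfolding W_def of_nat_le_iff by (rule card_edges_within_ge[OF assms])
    then have "(a j)\<^sup>2 * tent_mass_bound m \<le> (a j)\<^sup>2 * (min_len * card (W j))"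
      unfolding tent_mass_bound_def using min_len_pos by (intro mult_left_mono) auto
    also have "\<dots> = (\<Sum>e\<in>W j. (a j)\<^sup>2 * min_len)" by simp
    also have "\<dots> \<le> (\<Sum>e\<in>W j. I e)"
    proof (rule sum_mono)
      fix e assume e: "e \<in> W j"
      then have "e \<in> edges G" by (simp add: W_def edges_within_def)
      then have "I e = (a j)\<^sup>2 * len G e" and "min_len \<le> len G e"
        unfolding I_def h_def using e j len_pos min_len_le
        by (auto intro!: integral_lin_interp_sq_const less_imp_le tents_on_edges_within simp: W_def)
      then show "(a j)\<^sup>2 * min_len \<le> I e" by (simp add: mult_left_mono)
    qed
    finally show ?thesis .
  qed
  have "tent_mass_bound m * (\<Sum>j<n. (a j)\<^sup>2) = (\<Sum>j<n. (a j)\<^sup>2 * tent_mass_bound m)"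
    by (simp add: sum_distrib_left mult.commute)
  also have "\<dots> \<le> (\<Sum>j<n. \<Sum>e\<in>W j. I e)"
    by (intro sum_mono W_le) simp
  also have "\<dots> = (\<Sum>e\<in>(\<Union>j<n. W j). I e)"
    using finite_W edges_within_disjoint by (intro sum.UNION_disjoint[symmetric]) (auto simp: W_def)
  also have "\<dots> \<le> (\<Sum>e\<in>(\<Union>j<n. edges_near (cen j) (2 * m)). I e)"
    using finite_tents_support W_sub integral_lin_interp_sq_nonneg by (intro sum_mono2) (auto simp: I_def)
  also have "\<dots> = L2sq G (lin_interp G h)"
    unfolding I_def
    by (rule L2sq_lin_interp[OF len_pos finite_tents_support tents_support_subset tents_endpoints_eq_0,
          folded h_def, symmetric])
  finally show ?thesis by (simp only: h_def)
qed

end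

end

theorem exists_subspace_D2sq_le_L2sq:
  assumes "0 < \<epsilon>"
  shows "\<exists>Y. module.subspace fscale Y \<and> vector_space.dim fscale Y = n \<and>
             (\<forall>y\<in>Y. y \<in> H1 G \<and> D2sq G y \<le> \<epsilon> * L2sq G y)"
proof -
  obtain m where m: "0 < m" "spread \<le> m"
    and ratio: "n / min_len * tent_energy_bound m \<le> \<epsilon> * tent_mass_bound m"
    using exists_radius_energy_le_mass[OF assms] by blast
  have far: "3 * m \<le> supnorm d (centre m i - centre m j)" if "i < n" "j < n" "i \<noteq> j" for i j
    using d_pos that(3) by (rule supnorm_centre_diff_ge)
  define p where "p i = (SOME e. e \<in> edges_within (centre m i) m)" for i
  have p: "p i \<in> edges_within (centre m i) m" for i
    unfolding p_def using edges_within_nonempty[OF m(2)] by (simp add: some_in_eq)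
  define w where "w j = lin_interp G (tent m (centre m j))" for j
  have dual: "w j (p i) 0 = (if i = j then 1 else 0)" if "i < n" "j < n" for i j
  proof -
    have "p i \<in> edges G" using p by (simp add: edges_within_def)
    then have "w j (p i) 0 = tent m (centre m j) (src G (p i))"
      using len_pos[of "p i"] by (simp add: w_def lin_interp_def)
    also have "\<dots> = (if i = j then 1 else 0)"
      using tent_on_edges_within[where cen = "centre m", OF m(1) far that p, where u = "src G (p i)"] by auto
    finally show ?thesis .
  qed
  show ?thesis
  proof (rule exists_subspace_dim_if_dual_points[where w = w and p = p and t = "\<lambda>_. 0", OF dual])
    fix a
    define y where "y = lin_interp G (\<lambda>v. \<Sum>j<n. a j * tent m (centre m j) v)"
    have y: "(\<lambda>e x. \<Sum>j<n. a j * w j e x) = y"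
      by (simp add: y_def w_def lin_interp_sum fun_eq_iff)
    have "D2sq G y \<le> n / min_len * tent_energy_bound m * (\<Sum>j<n. (a j)\<^sup>2)"
      unfolding y_def by (rule D2sq_lin_interp_tents_le[OF m(1)])
    also have "\<dots> \<le> \<epsilon> * tent_mass_bound m * (\<Sum>j<n. (a j)\<^sup>2)"
      using ratio by (intro mult_right_mono) (auto intro: sum_nonneg)
    also have "\<dots> \<le> \<epsilon> * L2sq G y"
      unfolding y_def mult.assoc using L2sq_lin_interp_tents_ge[where cen = "centre m", OF m(1) far m(2)] assms
      by (intro mult_left_mono) auto
    finally show "(\<lambda>e x. \<Sum>j<n. a j * w j e x) \<in> H1 G \<and>
        D2sq G (\<lambda>e x. \<Sum>j<n. a j * w j e x) \<le> \<epsilon> * L2sq G (\<lambda>e x. \<Sum>j<n. a j * w j e x)"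
      unfolding y y_def using lin_interp_tents_in_H1[OF m(1)] by blast
  qed
qed

end

theorem lemma6p2:
  fixes G :: "('v, 'e) mgraph" and lam :: real
  assumes "periodic G" and "lam < 0"
  shows "\<exists>Y. Y \<subseteq> H1 G \<and> module.subspace fscale Y \<and> vector_space.dim fscale Y = 3 \<and>
           (\<forall>w\<in>Y. D2sq G w + lam * L2sq G w \<le> lam / 2 * H1sq G w)"
proof -
  obtain d \<phi> \<psi> FE FV where G: "periodic_graph G d \<phi> \<psi> FE FV"
    using periodic_graph_if_periodic[OF assms(1)] .
  have "0 < - lam / (2 - lam)" using assms(2) by (intro divide_pos_pos) auto
  then obtain Y where Y: "module.subspace fscale Y" "vector_space.dim fscale Y = 3"
    and small: "\<And>y. y \<in> Y \<Longrightarrow> y \<in> H1 G \<and> D2sq G y \<le> - lam / (2 - lam) * L2sq G y"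
    using periodic_graph.exists_subspace_D2sq_le_L2sq[OF G, where n = 3] by blast
  have "D2sq G y + lam * L2sq G y \<le> lam / 2 * H1sq G y" if "y \<in> Y" for y
  proof -
    have "(2 - lam) * D2sq G y \<le> - lam * L2sq G y"
      using small[OF that] assms(2) by (simp add: field_simps)
    then show ?thesis by (simp add: H1sq_def field_simps)
  qed
  then show ?thesis using Y small by blast
qed

end
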